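(* Let $\Gamma\subset SL(2,\mathbb Z)$ be a congruence subgroup, $n_0\in\mathbb Z$, $k\ge0$, $l\in\mathbb Z$, and let $I^{n_0}_{k,l}$ be the (finite) set of four-tuples of partitions with part $n_0$, conformal weight $k$ and fermionic charge $l$. For every $v=\sum a_{-\lambda}\phi_{-\mu}\psi_{-\nu}b_{-\chi}f_{\lambda\mu\nu\chi}\in W_{n_0}(k,l)^\Gamma_0$, each coefficient $f_{\lambda\mu\nu\chi}$ with $(\lambda,\mu,\nu,\chi)\in I^{n_0}_{k,l}$ is a modular form of weight $2n_0$ for $\Gamma$. Consequently the map $\alpha_{n_0}:W_{n_0}(k,l)^\Gamma_0\to M_{2n_0}(\Gamma)^{\oplus|I^{n_0}_{k,l}|}$, $v\mapsto(f_{\lambda\mu\nu\chi})_{(\lambda,\mu,\nu,\chi)\in I^{n_0}_{k,l}}$, is well defined with kernel $W_{n_0+1}(k,l)^\Gamma_0$, so $W_{n_0}(k,l)^\Gamma_0/W_{n_0+1}(k,l)^\Gamma_0$ embeds into $M_{2n_0}(\Gamma)^{\oplus|I^{n_0}_{k,l}|}$.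
   Context: Setup. $\Omega^{ch}(\mathbb H)=(V_1\otimes\bigwedge_1)\otimes_{\mathbb C[b_0]}\mathcal O(\mathbb H)$ with $V_1$ the vacuum Heisenberg module ($[a_m,b_n]=\delta_{m+n,0}$, $a_m\mathbf 1=0$ for $m\ge0$, $b_n\mathbf 1=0$ for $n\ge1$), $\bigwedge_1$ the vacuum Clifford module (odd $\phi_n,\psi_n$, $[\phi_m,\psi_n]=\delta_{m+n,0}$, $\phi_m\mathbf 1=0$ for $m\ge1$, $\psi_n\mathbf 1=0$ for $n\ge0$), $\mathcal O(\mathbb H)$ the holomorphic functions on the upper half plane with $b_0$ acting by multiplication by the coordinate; it is a vertex operator superalgebra (chiral de Rham complex of $\mathbb H$) with Virasoro element $\omega=b_{-1}a_{-1}\mathbf1+\phi_{-1}\psi_{-1}\mathbf1$. Partitions: $\lambda=(\lambda_1\ge\dots\ge\lambda_d\ge1)$ (possibly empty), $p(\lambda)=d$, $|\lambda|=\sum\lambda_i$. A four-tuple $(\lambda,\mu,\nu,\chi)$ has $\lambda,\chi$ partitions and $\mu,\nu$ partitions with distinct parts; $a_{-\lambda}=a_{-\lambda_1}\cdots a_{-\lambda_d}$, similarly $\psi_{-\nu},b_{-\chi}$, and $\phi_{-\mu}=\phi_{-\mu_1+1}\cdots\phi_{-\mu_t+1}$. Every element is uniquely a finite sum $\sum a_{-\lambda}\phi_{-\mu}\psi_{-\nu}b_{-\chi}f_{\lambda\mu\nu\chi}(b)$, $f_{\lambda\mu\nu\chi}\in\mathcal O(\mathbb H)$. The monomial $a_{-\lambda}\phi_{-\mu}\psi_{-\nu}b_{-\chi}f$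 has conformal weight $|\lambda|+|\mu|+|\nu|+|\chi|-p(\mu)$, fermionic charge $p(\mu)-p(\nu)$ and part $-p(\lambda)+p(\mu)-p(\nu)+p(\chi)$. $W_m(k,l)$ is the span of monomials of part $\ge m$, conformal weight $k$ and fermionic charge $l$. Group action: right action $\pi$ of $SL(2,\mathbb R)$ by vertex algebra automorphisms determined for $g=\begin{pmatrix}\alpha&\beta\\\gamma&\delta\end{pmatrix}$ by $\pi(g)a_{-1}\mathbf 1=a_{-1}(\gamma b+\delta)^2+2\gamma(\gamma b+\delta)\phi_0\psi_{-1}$, $\pi(g)b_{-1}\mathbf 1=b_{-1}(\gamma b+\delta)^{-2}$, $\pi(g)\psi_{-1}\mathbf 1=\psi_{-1}(\gamma b+\delta)^{2}$, $\pi(g)\phi_0\mathbf 1=\phi_0(\gamma b+\delta)^{-2}$, $\pi(g)f(b)=f(\frac{\alpha b+\beta}{\gamma b+\delta})$. For a congruence subgroup $\Gamma$, a $\pi(\Gamma)$-fixed $v$ is holomorphic at the cusps if for every $\rho\in SL(2,\mathbb Z)$ each coefficient function of $\pi(\rho)v$ (periodic of some period $N$) has Fourier expansion in $e^{2\pi im\tau/N}$ with no negative $m$. $W_m(k,l)^\Gamma_0$ is the set of $\Gamma$-fixed elements of $W_m(k,l)$ holomorphic at the cusps. $M_k(\Gamma)$ is the space of holomorphic modular forms of weight $k$ for $\Gamma$. *)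

theory Defs
  imports "HOL-Complex_Analysis.Complex_Analysis" "HOL-Library.Multiset" "HOL-Library.Function_Algebras"
begin

section \<open>The state space of the chiral de Rham complex of the upper half plane\<close>

text \<open>A monomial a_{-lambda} phi_{-mu} psi_{-nu} b_{-chi} is encoded as (A,P,S,B):
  A = multiset of the parts of lambda (a_{-n}, n >= 1),
  P = set of the m >= 0 with phi_{-m} present, i.e. P = {mu_i - 1},
  S = set of the parts of nu (psi_{-n}, n >= 1),
  B = multiset of the parts of chi (b_{-n}, n >= 1).
  The canonical ordering of the fermions is the one of the paper:
  phi_{-m} with decreasing m, followed by psi_{-n} with decreasing n.
  An element is a map from monomials to coefficient functions; coefficient
  functions only matter on the upper half plane H.\<close>

type_synonym cfun = "complex \<Rightarrow> complex"
type_synonym mono = "nat multiset \<times> nat set \<times> nat set \<times> nat multiset"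
type_synonym state = "mono \<Rightarrow> cfun"

definition HH :: "complex set" where "HH = {\<tau>. 0 < Im \<tau>}"

definition valid_mono :: "mono \<Rightarrow> bool" where
  "valid_mono m = (case m of (A,P,S,B) \<Rightarrow>
     finite P \<and> finite S \<and> 0 \<notin># A \<and> 0 \<notin># B \<and> 0 \<notin> S)"

definition wt :: "mono \<Rightarrow> nat" where
  "wt m = (case m of (A,P,S,B) \<Rightarrow> sum_mset A + \<Sum>P + \<Sum>S + sum_mset B)"

definition charge :: "mono \<Rightarrow> int" where
  "charge m = (case m of (A,P,S,B) \<Rightarrow> int (card P) - int (card S))"

definition part :: "mono \<Rightarrow> int" where
  "part m = (case m of (A,P,S,B) \<Rightarrow>
     - int (size A) + int (card P) - int (card S) + int (size B))"

definition msize :: "mono \<Rightarrow> nat" where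
  "msize m = (case m of (A,P,S,B) \<Rightarrow> size A + card P + card S + size B)"

definition mon :: "mono \<Rightarrow> cfun \<Rightarrow> state" where
  "mon m f = (\<lambda>m'. if m' = m then f else (\<lambda>_. 0))"

definition smul :: "complex \<Rightarrow> state \<Rightarrow> state" where
  "smul c v = (\<lambda>m \<tau>. c * v m \<tau>)"

definition nz :: "cfun \<Rightarrow> bool" where
  "nz f \<longleftrightarrow> (\<exists>\<tau>\<in>HH. f \<tau> \<noteq> 0)"

definition supp :: "state \<Rightarrow> mono set" where
  "supp v = {m. nz (v m)}"

definition lin :: "(mono \<Rightarrow> cfun \<Rightarrow> state) \<Rightarrow> state \<Rightarrow> state" where
  "lin F v = (\<Sum>m\<in>supp v. F m (v m))"

definition wtmax :: "state \<Rightarrow> nat" where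
  "wtmax w = Max (insert 0 (wt ` supp w))"

text \<open>a_n: creation for n<0, d/db_0 for n=0, d/d(b_{-n}) for n>0\<close>
definition aOp :: "int \<Rightarrow> mono \<Rightarrow> cfun \<Rightarrow> state" where
  "aOp n m f = (case m of (A,P,S,B) \<Rightarrow>
     if n < 0 then mon (A + {#nat (-n)#}, P, S, B) f
     else if n = 0 then mon m (deriv f)
     else mon (A, P, S, B - {#nat n#}) (\<lambda>\<tau>. of_nat (count B (nat n)) * f \<tau>))"

text \<open>b_n: creation for n<0, multiplication by the coordinate for n=0,
  -d/d(a_{-n}) for n>0\<close>
definition bOp :: "int \<Rightarrow> mono \<Rightarrow> cfun \<Rightarrow> state" where
  "bOp n m f = (case m of (A,P,S,B) \<Rightarrow>
     if n < 0 then mon (A, P, S, B + {#nat (-n)#}) f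
     else if n = 0 then mon m (\<lambda>\<tau>. \<tau> * f \<tau>)
     else mon (A - {#nat n#}, P, S, B) (\<lambda>\<tau>. - of_nat (count A (nat n)) * f \<tau>))"

text \<open>phi_n: creation for n<=0, odd derivation d/d(psi_{-n}) for n>0\<close>
definition phiOp :: "int \<Rightarrow> mono \<Rightarrow> cfun \<Rightarrow> state" where
  "phiOp n m f = (case m of (A,P,S,B) \<Rightarrow>
     if n \<le> 0 then
       (let j = nat (-n) in if j \<in> P then (\<lambda>_ _. 0)
        else mon (A, insert j P, S, B) (\<lambda>\<tau>. (-1) ^ card {p\<in>P. j < p} * f \<tau>))
     else
       (let j = nat n in if j \<in> S then
          mon (A, P, S - {j}, B) (\<lambda>\<tau>. (-1) ^ (card P + card {s\<in>S. j < s}) * f \<tau>)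
        else (\<lambda>_ _. 0)))"

text \<open>psi_n: creation for n<0, odd derivation d/d(phi_{-n}) for n>=0\<close>
definition psiOp :: "int \<Rightarrow> mono \<Rightarrow> cfun \<Rightarrow> state" where
  "psiOp n m f = (case m of (A,P,S,B) \<Rightarrow>
     if n < 0 then
       (let j = nat (-n) in if j \<in> S then (\<lambda>_ _. 0)
        else mon (A, P, insert j S, B) (\<lambda>\<tau>. (-1) ^ (card P + card {s\<in>S. j < s}) * f \<tau>))
     else
       (let j = nat n in if j \<in> P then
          mon (A, P - {j}, S, B) (\<lambda>\<tau>. (-1) ^ card {p\<in>P. j < p} * f \<tau>)
        else (\<lambda>_ _. 0)))"

text \<open>The n-th product operators u_(k) of the generating states
  a = a_{-1}1 (field sum a_n z^{-n-1}), b = b_0 1 (field sum b_n z^{-n}),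
  phi = phi_0 1 (field sum phi_n z^{-n}), psi = psi_{-1} 1 (field sum psi_n z^{-n-1}).\<close>
definition aM :: "int \<Rightarrow> state \<Rightarrow> state" where "aM k = lin (aOp k)"
definition bM :: "int \<Rightarrow> state \<Rightarrow> state" where "bM k = lin (bOp (k + 1))"
definition phiM :: "int \<Rightarrow> state \<Rightarrow> state" where "phiM k = lin (phiOp (k + 1))"
definition psiM :: "int \<Rightarrow> state \<Rightarrow> state" where "psiM k = lin (psiOp k)"

text \<open>Modes of the field f(b(z)) = sum_K f^(K)(b_0)/K! (b(z)-b_0)^K of the state f(b_0)1.\<close>
definition msum :: "int \<Rightarrow> nat multiset set" where
  "msum s = {M. 0 \<notin># M \<and> int (sum_mset M) = s}"

definition Fmono :: "cfun \<Rightarrow> int \<Rightarrow> mono \<Rightarrow> cfun \<Rightarrow> state" where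
  "Fmono f k m h = (case m of (A,P,S,B) \<Rightarrow>
     \<Sum>Q\<in>{Q. Q \<subseteq># A}. \<Sum>M\<in>msum (int (sum_mset Q) - k - 1).
       mon (A - Q, P, S, B + M)
         (\<lambda>\<tau>. ((-1) ^ size Q * (\<Prod>p\<in>set_mset Q. of_nat (count A p choose count Q p))
                / (\<Prod>n\<in>set_mset M. fact (count M n)))
               * (deriv ^^ (size Q + size M)) f \<tau> * h \<tau>))"

definition FM :: "cfun \<Rightarrow> int \<Rightarrow> state \<Rightarrow> state" where
  "FM f k = lin (Fmono f k)"

text \<open>Y(u)_(k) w for a monomial state u, computed by the Borcherds identity
  (x_(-j-1) u')_(k) = sum_i C(j+i,i) [x_(-j-1-i) u'_(k+i) + (-1)^j eps u'_(k-j-1-i) x_(i)];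
  the sums over i are finite, and are truncated at a bound beyond which all terms vanish
  by the weight grading. The first argument is fuel (the number of creation operators).\<close>
primrec Yf :: "nat \<Rightarrow> mono \<Rightarrow> cfun \<Rightarrow> int \<Rightarrow> state \<Rightarrow> state" where
  "Yf 0 m f k w = FM f k w"
| "Yf (Suc r) m f k w = (case m of (A,P,S,B) \<Rightarrow>
    let N = wt m + wtmax w + nat \<bar>k\<bar> + 1 in
    if A \<noteq> {#} then
      (let n = Max (set_mset A); u = (A - {#n#}, P, S, B) in
       \<Sum>i\<le>N. smul (of_nat ((n - 1 + i) choose i))
          (aM (- int n - int i) (Yf r u f (k + int i) w)
           + smul ((-1) ^ (n - 1)) (Yf r u f (k - int n - int i) (aM (int i) w))))
    else if B \<noteq> {#} then
      (let n = Max (set_mset B); u = (A, P, S, B - {#n#}) in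
       \<Sum>i\<le>N. smul (of_nat ((n + i) choose i))
          (bM (- int n - 1 - int i) (Yf r u f (k + int i) w)
           + smul ((-1) ^ n) (Yf r u f (k - int n - 1 - int i) (bM (int i) w))))
    else if P \<noteq> {} then
      (let n = Max P; u = (A, P - {n}, S, B) in
       \<Sum>i\<le>N. smul (of_nat ((n + i) choose i))
          (phiM (- int n - 1 - int i) (Yf r u f (k + int i) w)
           + smul ((-1) ^ (n + card (P - {n}) + card S))
               (Yf r u f (k - int n - 1 - int i) (phiM (int i) w))))
    else if S \<noteq> {} then
      (let n = Max S; u = (A, P, S - {n}, B) in
       \<Sum>i\<le>N. smul (of_nat ((n - 1 + i) choose i))
          (psiM (- int n - int i) (Yf r u f (k + int i) w)
           + smul ((-1) ^ (n - 1 + card (S - {n})))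
               (Yf r u f (k - int n - int i) (psiM (int i) w))))
    else FM f k w)"

definition YM :: "state \<Rightarrow> int \<Rightarrow> state \<Rightarrow> state" where
  "YM u k w = (\<Sum>m\<in>supp u. Yf (msize m) m (u m) k w)"

section \<open>The SL(2,R) action\<close>

type_synonym real4 = "real \<times> real \<times> real \<times> real"
type_synonym int4 = "int \<times> int \<times> int \<times> int"

definition mob :: "real4 \<Rightarrow> complex \<Rightarrow> complex" where
  "mob g \<tau> = (case g of (\<alpha>,\<beta>,\<gamma>,\<delta>) \<Rightarrow>
     (of_real \<alpha> * \<tau> + of_real \<beta>) / (of_real \<gamma> * \<tau> + of_real \<delta>))"

definition jf :: "real4 \<Rightarrow> complex \<Rightarrow> complex" where
  "jf g \<tau> = (case g of (\<alpha>,\<beta>,\<gamma>,\<delta>) \<Rightarrow> of_real \<gamma> * \<tau> + of_real \<delta>)"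

definition emono :: mono where "emono = ({#}, {}, {}, {#})"

text \<open>images of the generating states a_{-1}1, b_0 1, phi_0 1, psi_{-1} 1\<close>
definition piA :: "real4 \<Rightarrow> state" where
  "piA g = mon ({#1#}, {}, {}, {#}) (\<lambda>\<tau>. (jf g \<tau>)^2)
         + mon ({#}, {0}, {1}, {#}) (\<lambda>\<tau>. 2 * of_real (fst (snd (snd g))) * jf g \<tau>)"
definition piB :: "real4 \<Rightarrow> state" where
  "piB g = mon emono (mob g)"
definition piPhi :: "real4 \<Rightarrow> state" where
  "piPhi g = mon ({#}, {0}, {}, {#}) (\<lambda>\<tau>. 1 / (jf g \<tau>)^2)"
definition piPsi :: "real4 \<Rightarrow> state" where
  "piPsi g = mon ({#}, {}, {1}, {#}) (\<lambda>\<tau>. (jf g \<tau>)^2)"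

text \<open>pi(g) is the vertex algebra automorphism: pi(x_(n) u) = pi(x)_(n) pi(u)\<close>
primrec pif :: "nat \<Rightarrow> real4 \<Rightarrow> mono \<Rightarrow> cfun \<Rightarrow> state" where
  "pif 0 g m f = mon emono (\<lambda>\<tau>. f (mob g \<tau>))"
| "pif (Suc r) g m f = (case m of (A,P,S,B) \<Rightarrow>
    if A \<noteq> {#} then (let n = Max (set_mset A) in
      YM (piA g) (- int n) (pif r g (A - {#n#}, P, S, B) f))
    else if B \<noteq> {#} then (let n = Max (set_mset B) in
      YM (piB g) (- int n - 1) (pif r g (A, P, S, B - {#n#}) f))
    else if P \<noteq> {} then (let n = Max P in
      YM (piPhi g) (- int n - 1) (pif r g (A, P - {n}, S, B) f))
    else if S \<noteq> {} then (let n = Max S in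
      YM (piPsi g) (- int n) (pif r g (A, P, S - {n}, B) f))
    else mon emono (\<lambda>\<tau>. f (mob g \<tau>)))"

definition piact :: "real4 \<Rightarrow> state \<Rightarrow> state" where
  "piact g = lin (\<lambda>m f. pif (msize m) g m f)"

section \<open>Congruence subgroups, modular forms, cusps\<close>

definition rm :: "int4 \<Rightarrow> real4" where
  "rm g = (case g of (a,b,c,d) \<Rightarrow> (of_int a, of_int b, of_int c, of_int d))"

definition SL2Z :: "int4 set" where
  "SL2Z = {(a,b,c,d). a * d - b * c = 1}"

definition mmul :: "int4 \<Rightarrow> int4 \<Rightarrow> int4" where
  "mmul g h = (case g of (a,b,c,d) \<Rightarrow> case h of (a',b',c',d') \<Rightarrow>
     (a*a' + b*c', a*b' + b*d', c*a' + d*c', c*b' + d*d'))"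

definition minv :: "int4 \<Rightarrow> int4" where
  "minv g = (case g of (a,b,c,d) \<Rightarrow> (d, -b, -c, a))"

definition principal :: "nat \<Rightarrow> int4 set" where
  "principal N = {(a,b,c,d) \<in> SL2Z. (a - 1) mod int N = 0 \<and> b mod int N = 0
                    \<and> c mod int N = 0 \<and> (d - 1) mod int N = 0}"

definition congruence_subgroup :: "int4 set \<Rightarrow> bool" where
  "congruence_subgroup \<Gamma> \<longleftrightarrow> \<Gamma> \<subseteq> SL2Z \<and> (1,0,0,1) \<in> \<Gamma>
     \<and> (\<forall>g\<in>\<Gamma>. \<forall>h\<in>\<Gamma>. mmul g h \<in> \<Gamma>) \<and> (\<forall>g\<in>\<Gamma>. minv g \<in> \<Gamma>)
     \<and> (\<exists>N>0. principal N \<subseteq> \<Gamma>)"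

definition hol_cusp :: "cfun \<Rightarrow> bool" where
  "hol_cusp h \<longleftrightarrow> (\<exists>N::nat. N > 0 \<and> (\<forall>\<tau>\<in>HH. h (\<tau> + of_nat N) = h \<tau>) \<and>
     (\<exists>c::nat \<Rightarrow> complex. \<forall>\<tau>\<in>HH.
        (\<lambda>m. c m * exp (2 * of_real pi * \<i> * of_nat m * \<tau> / of_nat N)) sums h \<tau>))"

definition modular_form :: "int \<Rightarrow> int4 set \<Rightarrow> cfun \<Rightarrow> bool" where
  "modular_form k \<Gamma> f \<longleftrightarrow> f holomorphic_on HH
     \<and> (\<forall>g\<in>\<Gamma>. \<forall>\<tau>\<in>HH. f (mob (rm g) \<tau>) = (jf (rm g) \<tau>) powi k * f \<tau>)
     \<and> (\<forall>\<rho>\<in>SL2Z. hol_cusp (\<lambda>\<tau>. (jf (rm \<rho>) \<tau>) powi (- k) * f (mob (rm \<rho>) \<tau>)))"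

definition W :: "int \<Rightarrow> nat \<Rightarrow> int \<Rightarrow> state set" where
  "W m0 k l = {v. finite (supp v) \<and> (\<forall>m. v m holomorphic_on HH)
     \<and> (\<forall>m\<in>supp v. valid_mono m \<and> part m \<ge> m0 \<and> wt m = k \<and> charge m = l)}"

definition Wfix0 :: "int4 set \<Rightarrow> int \<Rightarrow> nat \<Rightarrow> int \<Rightarrow> state set" where
  "Wfix0 \<Gamma> m0 k l = {v \<in> W m0 k l.
     (\<forall>g\<in>\<Gamma>. \<forall>m. \<forall>\<tau>\<in>HH. piact (rm g) v m \<tau> = v m \<tau>)
     \<and> (\<forall>\<rho>\<in>SL2Z. \<forall>m. hol_cusp (piact (rm \<rho>) v m))}"

definition Iset :: "int \<Rightarrow> nat \<Rightarrow> int \<Rightarrow> mono set" where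
  "Iset n0 k l = {m. valid_mono m \<and> part m = n0 \<and> wt m = k \<and> charge m = l}"

end

theory Submission
  imports Defs
begin

text \<open>Applying \<pi>(g) to a monomial of part p yields
  (c\<tau> + d)^(-2p) f(g\<tau>) times the same monomial, plus monomials of strictly larger part:
  the creation modes of a and \<psi> contribute a factor (c\<tau> + d)^2 and lower the part by
  one, those of b and \<phi> contribute (c\<tau> + d)^(-2) and raise it by one, and every other
  term of the vertex operators raises the part further. So on W_n0 the coefficients of part
  exactly n0 transform under \<pi>(g) like modular forms of weight 2 n0; \<Gamma>-invariance and
  holomorphy at the cusps of the state become the corresponding properties of these
  coefficients, and they vanish exactly when the state lies in W_(n0+1).\<close>

section \<open>States filtered by part\<close>

lemma state_sum_apply: "(\<Sum>x\<in>X. (f x :: state)) m \<tau> = (\<Sum>x\<in>X. f x m \<tau>)"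
  by (induction X rule: infinite_finite_induct) auto

lemma supp_zero [simp]: "supp (\<lambda>_ _. 0) = {}" "supp 0 = {}"
  by (auto simp: supp_def nz_def)

lemma supp_add: "supp (v + w) \<subseteq> supp v \<union> supp w"
  by (auto simp: supp_def nz_def)

lemma supp_mon: "supp (mon m f) \<subseteq> {m}"
  by (auto simp: supp_def nz_def mon_def)

lemma supp_smul: "supp (smul c v) \<subseteq> supp v"
  by (auto simp: supp_def nz_def smul_def)

lemma not_in_supp_vanishes: "m \<notin> supp w \<Longrightarrow> \<tau> \<in> HH \<Longrightarrow> w m \<tau> = 0"
  by (auto simp: supp_def nz_def)

text \<open>Since card of an infinite set is 0, part is only meaningful for monomials with
  finitely many fermions.\<close>
definition fin_fermions :: "mono \<Rightarrow> bool" where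
  "fin_fermions m = (case m of (A,P,S,B) \<Rightarrow> finite P \<and> finite S)"

lemma fin_fermions_eq [simp]: "fin_fermions (A,P,S,B) = (finite P \<and> finite S)"
  by (simp add: fin_fermions_def)

lemma part_eq: "part (A,P,S,B) = - int (size A) + int (card P) - int (card S) + int (size B)"
  by (simp add: part_def)

definition part_ge :: "int \<Rightarrow> state \<Rightarrow> bool" where
  "part_ge p w \<longleftrightarrow> finite (supp w) \<and> (\<forall>m\<in>supp w. p \<le> part m \<and> fin_fermions m)"

definition leading_term :: "int \<Rightarrow> mono \<Rightarrow> cfun \<Rightarrow> state \<Rightarrow> bool" where
  "leading_term p m h w \<longleftrightarrow> part_ge p w \<and> part m = p \<and> fin_fermions m
     \<and> (\<forall>m'\<in>supp w. m' \<noteq> m \<longrightarrow> p < part m') \<and> (\<forall>\<tau>\<in>HH. w m \<tau> = h \<tau>)"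

lemma part_ge_zero [simp]: "part_ge p (\<lambda>_ _. 0)" "part_ge p 0"
  by (auto simp: part_ge_def)

lemma part_ge_mono: "part_ge p v \<Longrightarrow> q \<le> p \<Longrightarrow> part_ge q v"
  unfolding part_ge_def by auto

lemma part_ge_add: "part_ge p v \<Longrightarrow> part_ge p w \<Longrightarrow> part_ge p (v + w)"
  unfolding part_ge_def using supp_add[of v w] by (meson finite_Un rev_finite_subset subsetD Un_iff)

lemma part_ge_sum: "(\<And>x. x \<in> X \<Longrightarrow> part_ge p (f x)) \<Longrightarrow> part_ge p (\<Sum>x\<in>X. f x)"
  by (induction X rule: infinite_finite_induct) (auto intro: part_ge_add)

lemma part_ge_smul: "part_ge p v \<Longrightarrow> part_ge p (smul c v)"
  unfolding part_ge_def using supp_smul[of c v] by (meson rev_finite_subset subsetD)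

lemma part_ge_mon: "q \<le> part m \<Longrightarrow> fin_fermions m \<Longrightarrow> part_ge q (mon m f)"
  unfolding part_ge_def using supp_mon[of m f] by (auto intro: rev_finite_subset)

lemma part_ge_lin:
  assumes F: "\<And>m f. fin_fermions m \<Longrightarrow> part_ge (part m + d) (F m f)" and w: "part_ge p w"
  shows "part_ge (p + d) (lin F w)"
  unfolding lin_def
proof (rule part_ge_sum)
  fix m assume "m \<in> supp w"
  then have "fin_fermions m" "p \<le> part m" using w by (auto simp: part_ge_def)
  then show "part_ge (p + d) (F m (w m))" using F[of m "w m"] part_ge_mono by fastforce
qed

lemma leading_term_part_ge: "leading_term p m h w \<Longrightarrow> part_ge p w"
  by (simp add: leading_term_def)

lemma leading_term_cong: "leading_term p m h w \<Longrightarrow> (\<And>\<tau>. \<tau> \<in> HH \<Longrightarrow> h \<tau> = h' \<tau>) \<Longrightarrow> leading_term p m h' w"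
  by (auto simp: leading_term_def)

lemma leading_term_mon: "part m = p \<Longrightarrow> fin_fermions m \<Longrightarrow> leading_term p m h (mon m h)"
  using supp_mon[of m h] part_ge_mon[of p m h] by (auto simp: leading_term_def mon_def)

lemma leading_term_add:
  assumes v: "leading_term p m h v" and w: "part_ge (p + 1) w"
  shows "leading_term p m h (v + w)"
proof -
  have "m \<notin> supp w" using assms by (auto simp: part_ge_def leading_term_def)
  then have "\<forall>\<tau>\<in>HH. w m \<tau> = 0" using not_in_supp_vanishes by blast
  moreover have "part_ge p (v + w)"
    using v w part_ge_add part_ge_mono leading_term_def by (metis less_add_one order_less_imp_le)
  moreover have "\<forall>m'\<in>supp (v + w). m' \<noteq> m \<longrightarrow> p < part m'"
    using v w supp_add[of v w] unfolding leading_term_def part_ge_def by fastforce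
  ultimately show ?thesis using v by (auto simp: leading_term_def)
qed

lemma leading_term_vanishing:
  assumes w: "part_ge (p + 1) w" and m: "part m = p" "fin_fermions m" and h: "\<forall>\<tau>\<in>HH. h \<tau> = 0"
  shows "leading_term p m h w"
proof -
  have "m \<notin> supp w" using w m by (auto simp: part_ge_def)
  then have "\<forall>\<tau>\<in>HH. w m \<tau> = h \<tau>" using h not_in_supp_vanishes by auto
  moreover have "\<forall>m'\<in>supp w. m' \<noteq> m \<longrightarrow> p < part m'" using w by (auto simp: part_ge_def)
  ultimately show ?thesis using m part_ge_mono[OF w] unfolding leading_term_def by simp
qed

lemma leading_term_sum:
  assumes "finite I" "t \<in> I" "leading_term p m h (T t)"
    and "\<And>i. i \<in> I - {t} \<Longrightarrow> part_ge (p + 1) (T i)"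
  shows "leading_term p m h (\<Sum>i\<in>I. T i)"
proof -
  have "(\<Sum>i\<in>I. T i) = T t + (\<Sum>i\<in>I - {t}. T i)" using assms(1,2) by (simp add: sum.remove)
  then show ?thesis
    using leading_term_add[OF assms(3) part_ge_sum[of "I - {t}" "p + 1" T]] assms(4) by simp
qed

lemma leading_term_lin:
  assumes F: "\<And>m f. fin_fermions m \<Longrightarrow> part_ge (part m + d) (F m f)"
    and Fm: "\<And>f. leading_term (p + d) m' (\<lambda>\<tau>. G \<tau> * f \<tau>) (F m f)"
    and w: "leading_term p m h w"
  shows "leading_term (p + d) m' (\<lambda>\<tau>. G \<tau> * h \<tau>) (lin F w)"
proof -
  have fin: "finite (supp w)" using w by (simp add: leading_term_def part_ge_def)
  have rest: "part_ge (p + d + 1) (\<Sum>m''\<in>supp w - {m}. F m'' (w m''))"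
  proof (rule part_ge_sum)
    fix m'' assume "m'' \<in> supp w - {m}"
    then have "fin_fermions m''" "p + 1 \<le> part m''" using w by (auto simp: leading_term_def part_ge_def)
    then show "part_ge (p + d + 1) (F m'' (w m''))" using F[of m'' "w m''"] part_ge_mono by fastforce
  qed
  show ?thesis
  proof (cases "m \<in> supp w")
    case True
    then have "lin F w = F m (w m) + (\<Sum>m''\<in>supp w - {m}. F m'' (w m''))"
      unfolding lin_def using fin by (simp add: sum.remove)
    moreover have "leading_term (p + d) m' (\<lambda>\<tau>. G \<tau> * h \<tau>) (F m (w m))"
      by (rule leading_term_cong[OF Fm]) (use w in \<open>simp add: leading_term_def\<close>)
    ultimately show ?thesis using leading_term_add rest by simp
  next
    case False
    then have "lin F w = (\<Sum>m''\<in>supp w - {m}. F m'' (w m''))" unfolding lin_def by simp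
    moreover have "\<forall>\<tau>\<in>HH. G \<tau> * h \<tau> = 0"
      using not_in_supp_vanishes[OF False] w by (simp add: leading_term_def)
    moreover have "part m' = p + d" "fin_fermions m'" using Fm[of h] by (auto simp: leading_term_def)
    ultimately show ?thesis using rest leading_term_vanishing by simp
  qed
qed

lemma card_remove_int: "finite S \<Longrightarrow> x \<in> S \<Longrightarrow> int (card (S - {x})) = int (card S) - 1"
  by (metis card_Diff_singleton card_gt_0_iff empty_iff of_nat_1 of_nat_diff One_nat_def Suc_leI)

lemma part_ge_aOp: "fin_fermions m \<Longrightarrow> part_ge (part m - 1) (aOp n m f)"
proof (cases m)
  case (fields A P S B)
  assume "fin_fermions m"
  moreover have "int (size (B - {#nat n#})) \<ge> int (size B) - 1"
    by (cases "nat n \<in># B") (auto simp: size_Diff_singleton)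
  ultimately show ?thesis using fields by (auto simp: aOp_def part_eq intro!: part_ge_mon)
qed

lemma part_ge_phiOp: "fin_fermions m \<Longrightarrow> part_ge (part m + 1) (phiOp n m f)"
proof (cases m)
  case (fields A P S B)
  assume "fin_fermions m"
  then show ?thesis using fields card_gt_0_iff[of S]
    by (auto simp: phiOp_def part_eq Let_def card_remove_int
        simp del: card_Diff_singleton card_Diff_singleton_if intro!: part_ge_mon)
qed

lemma part_ge_psiOp: "fin_fermions m \<Longrightarrow> part_ge (part m - 1) (psiOp n m f)"
  by (cases m) (auto simp: psiOp_def part_eq Let_def card_remove_int
      simp del: card_Diff_singleton card_Diff_singleton_if intro!: part_ge_mon)

lemma part_ge_aM: "part_ge p w \<Longrightarrow> part_ge (p - 1) (aM k w)"
  unfolding aM_def using part_ge_lin[of "-1" "aOp k" p w] part_ge_aOp by simp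

lemma part_ge_phiM: "part_ge p w \<Longrightarrow> part_ge (p + 1) (phiM k w)"
  unfolding phiM_def using part_ge_lin[of 1 "phiOp (k + 1)" p w] part_ge_phiOp by simp

lemma part_ge_psiM: "part_ge p w \<Longrightarrow> part_ge (p - 1) (psiM k w)"
  unfolding psiM_def using part_ge_lin[of "-1" "psiOp k" p w] part_ge_psiOp by simp

lemma leading_term_aM:
  assumes n: "1 \<le> n" and w: "leading_term p (A,P,S,B) h w"
  shows "leading_term (p - 1) (A + {#n#},P,S,B) h (aM (- int n) w)"
proof -
  have "part (A,P,S,B) = p" "fin_fermions (A,P,S,B)" using w by (auto simp: leading_term_def)
  then have L: "leading_term (p + -1) (A + {#n#},P,S,B) (\<lambda>\<tau>. 1 * f \<tau>) (aOp (- int n) (A,P,S,B) f)"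
    for f using n leading_term_mon by (simp add: aOp_def part_eq)
  have "leading_term (p + -1) (A + {#n#},P,S,B) (\<lambda>\<tau>. 1 * h \<tau>) (aM (- int n) w)"
    unfolding aM_def
    by (rule leading_term_lin[where d = "-1" and F = "aOp (- int n)" and G = "\<lambda>_. 1", OF _ L w])
      (use part_ge_aOp in simp)
  then show ?thesis by simp
qed

lemma leading_term_phiM:
  assumes q: "q \<notin> P" and w: "leading_term p (A,P,S,B) h w"
  shows "leading_term (p + 1) (A, insert q P,S,B) (\<lambda>\<tau>. (-1) ^ card {x\<in>P. q < x} * h \<tau>)
    (phiM (- int q - 1) w)"
proof -
  have "part (A,P,S,B) = p" "fin_fermions (A,P,S,B)" using w by (auto simp: leading_term_def)
  then have L: "leading_term (p + 1) (A, insert q P,S,B) (\<lambda>\<tau>. (-1) ^ card {x\<in>P. q < x} * f \<tau>)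
      (phiOp (- int q) (A,P,S,B) f)" for f
    using q leading_term_mon by (simp add: phiOp_def Let_def part_eq)
  show ?thesis
    unfolding phiM_def diff_add_cancel by (rule leading_term_lin[where d = 1 and F = "phiOp (- int q)"
      and G = "\<lambda>_. (-1) ^ card {x\<in>P. q < x}", OF _ L w]) (use part_ge_phiOp in simp)
qed

lemma leading_term_psiM:
  assumes s: "s \<notin> S" "1 \<le> s" and w: "leading_term p (A,P,S,B) h w"
  shows "leading_term (p - 1) (A, P, insert s S,B)
    (\<lambda>\<tau>. (-1) ^ (card P + card {x\<in>S. s < x}) * h \<tau>) (psiM (- int s) w)"
proof -
  have "part (A,P,S,B) = p" "fin_fermions (A,P,S,B)" using w by (auto simp: leading_term_def)
  then have L: "leading_term (p + -1) (A, P, insert s S,B)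
      (\<lambda>\<tau>. (-1) ^ (card P + card {x\<in>S. s < x}) * f \<tau>) (psiOp (- int s) (A,P,S,B) f)" for f
    using s leading_term_mon by (simp add: psiOp_def Let_def part_eq)
  have "leading_term (p + -1) (A, P, insert s S,B)
      (\<lambda>\<tau>. (-1) ^ (card P + card {x\<in>S. s < x}) * h \<tau>) (psiM (- int s) w)"
    unfolding psiM_def by (rule leading_term_lin[where d = "-1" and F = "psiOp (- int s)"
      and G = "\<lambda>_. (-1) ^ (card P + card {x\<in>S. s < x})", OF _ L w]) (use part_ge_psiOp in simp)
  then show ?thesis by simp
qed

lemma finite_multisets_size_le:
  assumes "finite A" shows "finite {M. set_mset M \<subseteq> A \<and> size M \<le> n}"
proof -
  have "{M. set_mset M \<subseteq> A \<and> size M \<le> n} = (\<Union>k\<le>n. multisets_of_size A k)"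
    by (auto simp: multisets_of_size_def)
  then show ?thesis using assms by auto
qed

lemma finite_submultisets: "finite {Q. Q \<subseteq># A}"
  by (rule finite_subset[OF _ finite_multisets_size_le[of "set_mset A" "size A"]])
    (auto dest: set_mset_mono size_mset_mono)

lemma size_le_sum_mset: "0 \<notin># (M :: nat multiset) \<Longrightarrow> size M \<le> sum_mset M"
  by (induction M) auto

lemma member_le_sum_mset: "x \<in># (M :: nat multiset) \<Longrightarrow> x \<le> sum_mset M"
  by (induction M) auto

lemma finite_positive_multisets_sum_le: "finite {M :: nat multiset. 0 \<notin># M \<and> sum_mset M \<le> k}"
  by (rule finite_subset[OF _ finite_multisets_size_le[of "{0..k}" k]])
    (auto dest: size_le_sum_mset member_le_sum_mset)

lemma finite_msum: "finite (msum s)"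
  by (rule finite_subset[OF _ finite_positive_multisets_sum_le[of "nat s"]])
    (auto simp: msum_def simp del: of_nat_sum_mset)

lemma msum_zero: "msum 0 = {{#}}"
proof -
  have "M = {#}" if "0 \<notin># M" "int (sum_mset M) = 0" for M :: "nat multiset"
    using that sum_mset_0_iff by (metis multiset_nonemptyE of_nat_eq_0_iff)
  then show ?thesis by (auto simp: msum_def simp del: of_nat_sum_mset)
qed

lemma msum_singleton_only: "1 \<le> n \<Longrightarrow> M \<in> msum (int n) \<Longrightarrow> M \<noteq> {#n#} \<Longrightarrow> 2 \<le> size M"
proof (rule ccontr)
  assume M: "1 \<le> n" "M \<in> msum (int n)" "M \<noteq> {#n#}" and "\<not> 2 \<le> size M"
  then have "size M = 0 \<or> size M = 1" by linarith
  moreover have "M \<noteq> {#}" using M by (auto simp: msum_def)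
  ultimately obtain x where "M = {#x#}" using size_1_singleton_mset by auto
  then show False using M by (auto simp: msum_def)
qed

lemma part_Fmono_term:
  "Q \<subseteq># A \<Longrightarrow> part (A - Q, P, S, B + M) = part (A,P,S,B) + int (size Q) + int (size M)"
  using size_mset_mono[of Q A] by (simp add: part_eq size_Diff_submset of_nat_diff)

text \<open>Every term of f(b)_(k) other than multiplication by f(b_0) (the case k = -1)
  removes some a's or adds some b's, and so raises the part.\<close>
lemma part_ge_Fmono: "fin_fermions m \<Longrightarrow> part_ge (part m + (if k = -1 then 0 else 1)) (Fmono c k m h)"
proof (cases m)
  case (fields A P S B)
  assume fm: "fin_fermions m"
  show ?thesis unfolding fields Fmono_def prod.case
  proof (intro part_ge_sum part_ge_mon)
    fix Q M assume Q: "Q \<in> {Q. Q \<subseteq># A}" and M: "M \<in> msum (int (sum_mset Q) - k - 1)"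
    show "fin_fermions (A - Q, P, S, B + M)" using fm fields by simp
    have "k \<noteq> -1 \<Longrightarrow> Q \<noteq> {#} \<or> M \<noteq> {#}" using M by (auto simp: msum_def)
    then have "k \<noteq> -1 \<Longrightarrow> 1 \<le> size Q + size M" by (auto simp: Suc_le_eq nonempty_has_size)
    then show "part (A, P, S, B) + (if k = - 1 then 0 else 1) \<le> part (A - Q, P, S, B + M)"
      using part_Fmono_term Q by auto
  qed
qed

lemma part_ge_FM: "part_ge p w \<Longrightarrow> part_ge p (FM c k w)"
  unfolding FM_def using part_ge_lin[of 0 "Fmono c k" p w] part_ge_Fmono[of _ k c] part_ge_mono
  by (smt (verit, best))

lemma part_ge_FM_raise: "k \<noteq> -1 \<Longrightarrow> part_ge p w \<Longrightarrow> part_ge (p + 1) (FM c k w)"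
  unfolding FM_def using part_ge_lin[of 1 "Fmono c k" p w] part_ge_Fmono[of _ k c] by simp

lemma leading_term_Fmono_mult:
  assumes fm: "fin_fermions m"
  shows "leading_term (part m) m (\<lambda>\<tau>. c \<tau> * f \<tau>) (Fmono c (-1) m f)"
proof (cases m)
  case (fields A P S B)
  let ?T = "\<lambda>Q. \<Sum>M\<in>msum (int (sum_mset Q) - (-1) - 1).
       mon (A - Q, P, S, B + M)
         (\<lambda>\<tau>. ((-1) ^ size Q * (\<Prod>p\<in>set_mset Q. of_nat (count A p choose count Q p))
                / (\<Prod>n\<in>set_mset M. fact (count M n)))
               * (deriv ^^ (size Q + size M)) c \<tau> * f \<tau>)"
  have "Fmono c (-1) m f = (\<Sum>Q\<in>{Q. Q \<subseteq># A}. ?T Q)" unfolding fields Fmono_def by simp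
  also have "\<dots> = ?T {#} + (\<Sum>Q\<in>{Q. Q \<subseteq># A} - {{#}}. ?T Q)"
    by (rule sum.remove) (use finite_submultisets[of A] in auto)
  also have "?T {#} = mon m (\<lambda>\<tau>. c \<tau> * f \<tau>)" unfolding fields by (simp add: msum_zero)
  finally have eq: "Fmono c (-1) m f = mon m (\<lambda>\<tau>. c \<tau> * f \<tau>) + (\<Sum>Q\<in>{Q. Q \<subseteq># A} - {{#}}. ?T Q)" .
  have "part_ge (part m + 1) (\<Sum>Q\<in>{Q. Q \<subseteq># A} - {{#}}. ?T Q)"
  proof (intro part_ge_sum part_ge_mon)
    fix Q M assume Q: "Q \<in> {Q. Q \<subseteq># A} - {{#}}"
    show "fin_fermions (A - Q, P, S, B + M)" using fm fields by simp
    have "1 \<le> size Q" using Q by (auto simp: Suc_le_eq nonempty_has_size)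
    then show "part m + 1 \<le> part (A - Q, P, S, B + M)"
      using part_Fmono_term[of Q A P S B M] Q unfolding fields by auto
  qed
  then show ?thesis unfolding eq by (rule leading_term_add[OF leading_term_mon[OF refl fm]])
qed

lemma leading_term_FM_mult:
  assumes w: "leading_term p m h w" shows "leading_term p m (\<lambda>\<tau>. c \<tau> * h \<tau>) (FM c (-1) w)"
proof -
  have m: "part m = p" "fin_fermions m" using w by (auto simp: leading_term_def)
  have F: "\<And>m f. fin_fermions m \<Longrightarrow> part_ge (part m + 0) (Fmono c (-1) m f)"
    using part_ge_Fmono[of _ "-1" c] by simp
  have L: "\<And>f. leading_term (p + 0) m (\<lambda>\<tau>. c \<tau> * f \<tau>) (Fmono c (-1) m f)"
    using leading_term_Fmono_mult[OF m(2)] m(1) by simp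
  show ?thesis using leading_term_lin[of 0 "Fmono c (-1)" p m c, OF F L w] unfolding FM_def by simp
qed

lemma part_Fmono_deriv_other_term:
  assumes Q: "Q \<subseteq># A" and M: "M \<in> msum (int (sum_mset Q) - (- int n - 1) - 1)"
    and n: "1 \<le> n" and other: "(Q, M) \<noteq> ({#}, {#n#})"
  shows "part (A,P,S,B) + 2 \<le> part (A - Q, P, S, B + M)"
proof -
  have "2 \<le> size Q + size M"
  proof (cases "Q = {#}")
    case True
    then show ?thesis using msum_singleton_only[OF n] M other by simp
  next
    case False
    moreover have "M \<noteq> {#}" using M n by (auto simp: msum_def simp del: of_nat_sum_mset)
    ultimately show ?thesis by (auto simp: Suc_le_eq nonempty_has_size)
  qed
  then show ?thesis using part_Fmono_term[OF Q] by simp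
qed

lemma leading_term_Fmono_deriv:
  assumes fm: "fin_fermions (A,P,S,B)" and n: "1 \<le> n"
  shows "leading_term (part (A,P,S,B) + 1) (A,P,S,B + {#n#}) (\<lambda>\<tau>. deriv c \<tau> * f \<tau>)
    (Fmono c (- int n - 1) (A,P,S,B) f)"
proof -
  let ?t = "\<lambda>Q M. mon (A - Q, P, S, B + M)
         (\<lambda>\<tau>. ((-1) ^ size Q * (\<Prod>p\<in>set_mset Q. of_nat (count A p choose count Q p))
                / (\<Prod>n\<in>set_mset M. fact (count M n)))
               * (deriv ^^ (size Q + size M)) c \<tau> * f \<tau>)"
  let ?T = "\<lambda>Q. \<Sum>M\<in>msum (int (sum_mset Q) - (- int n - 1) - 1). ?t Q M"
  let ?b = "mon (A,P,S,B + {#n#}) (\<lambda>\<tau>. deriv c \<tau> * f \<tau>)"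
  have "Fmono c (- int n - 1) (A,P,S,B) f = (\<Sum>Q\<in>{Q. Q \<subseteq># A}. ?T Q)" unfolding Fmono_def by simp
  also have "\<dots> = ?T {#} + (\<Sum>Q\<in>{Q. Q \<subseteq># A} - {{#}}. ?T Q)"
    by (rule sum.remove) (use finite_submultisets[of A] in auto)
  also have "?T {#} = (\<Sum>M\<in>msum (int n). ?t {#} M)" by simp
  also have "\<dots> = ?t {#} {#n#} + (\<Sum>M\<in>msum (int n) - {{#n#}}. ?t {#} M)"
    by (rule sum.remove) (use finite_msum n in \<open>auto simp: msum_def\<close>)
  also have "?t {#} {#n#} = ?b" by simp
  finally have eq: "Fmono c (- int n - 1) (A,P,S,B) f
    = ?b + (\<Sum>M\<in>msum (int n) - {{#n#}}. ?t {#} M) + (\<Sum>Q\<in>{Q. Q \<subseteq># A} - {{#}}. ?T Q)" .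
  have "part_ge (part (A,P,S,B) + 2) (\<Sum>M\<in>msum (int n) - {{#n#}}. ?t {#} M)"
    using fm n part_Fmono_deriv_other_term[of "{#}" A]
    by (intro part_ge_sum part_ge_mon) auto
  moreover have "part_ge (part (A,P,S,B) + 2) (\<Sum>Q\<in>{Q. Q \<subseteq># A} - {{#}}. ?T Q)"
    using fm n part_Fmono_deriv_other_term[of _ A]
    by (intro part_ge_sum part_ge_mon) auto
  moreover have "leading_term (part (A,P,S,B) + 1) (A,P,S,B + {#n#}) (\<lambda>\<tau>. deriv c \<tau> * f \<tau>) ?b"
    by (rule leading_term_mon) (use fm in \<open>auto simp: part_eq\<close>)
  ultimately show ?thesis unfolding eq by (intro leading_term_add) (auto intro: part_ge_mono)
qed

lemma leading_term_FM_deriv: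
  assumes n: "1 \<le> n" and w: "leading_term p (A,P,S,B) h w"
  shows "leading_term (p + 1) (A,P,S,B + {#n#}) (\<lambda>\<tau>. deriv c \<tau> * h \<tau>) (FM c (- int n - 1) w)"
proof -
  have m: "part (A,P,S,B) = p" "fin_fermions (A,P,S,B)" using w by (auto simp: leading_term_def)
  have F: "\<And>m f. fin_fermions m \<Longrightarrow> part_ge (part m + 1) (Fmono c (- int n - 1) m f)"
    using part_ge_Fmono[of _ "- int n - 1" c] n by simp
  have L: "\<And>f. leading_term (p + 1) (A,P,S,B + {#n#}) (\<lambda>\<tau>. deriv c \<tau> * f \<tau>)
      (Fmono c (- int n - 1) (A,P,S,B) f)"
    using leading_term_Fmono_deriv[OF m(2) n] m(1) by simp
  show ?thesis using leading_term_lin[OF F L w] unfolding FM_def by simp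
qed

text \<open>In the product x_(k) of a generator x = x_(-1)1 (a, \<phi> or \<psi>) with f(b), only the
  index t with k + t = -1 contributes a leading term: there f(b)_(-1) is multiplication
  by f(b_0) and is followed by the creation mode x_(-1-t).\<close>
lemma leading_term_mode_sum:
  assumes X: "\<And>j p w. part_ge p w \<Longrightarrow> part_ge (p + d) (X j w)"
    and lead: "leading_term (p + d) m h (X (-1 - int t) (FM c (-1) w))"
    and w: "part_ge p w" and k: "k + int t = -1" and t: "t \<le> N"
  shows "leading_term (p + d) m h
    (\<Sum>i\<le>N. X (- 1 - int i) (FM c (k + int i) w) + FM c (k - 1 - int i) (X (int i) w))"
proof (rule leading_term_sum)
  show "finite {..N}" "t \<in> {..N}" using t by auto
  have "part_ge (p + d + 1) (FM c (k - 1 - int t) (X (int t) w))"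
    using part_ge_FM_raise[OF _ X[OF w]] k by simp
  then show "leading_term (p + d) m h
      (X (- 1 - int t) (FM c (k + int t) w) + FM c (k - 1 - int t) (X (int t) w))"
    using leading_term_add[OF lead] k by simp
next
  fix i assume "i \<in> {..N} - {t}"
  then have "k + int i \<noteq> -1" using k by auto
  then have "part_ge (p + 1 + d) (X (- 1 - int i) (FM c (k + int i) w))"
    using X[OF part_ge_FM_raise[OF _ w]] by simp
  moreover have "part_ge (p + d + 1) (FM c (k - 1 - int i) (X (int i) w))"
    using part_ge_FM_raise[OF _ X[OF w]] k by simp
  ultimately show "part_ge (p + d + 1)
      (X (- 1 - int i) (FM c (k + int i) w) + FM c (k - 1 - int i) (X (int i) w))"
    by (simp add: ac_simps part_ge_add)
qed

definition a_mono :: mono where "a_mono = ({#1#}, {}, {}, {#})"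
definition phi_mono :: mono where "phi_mono = ({#}, {0}, {}, {#})"
definition psi_mono :: mono where "psi_mono = ({#}, {}, {1}, {#})"
definition phi_psi_mono :: mono where "phi_psi_mono = ({#}, {0}, {1}, {#})"

lemma smul_one [simp]: "smul 1 v = v"
  by (simp add: smul_def)

lemma Yf_a_mono: "Yf (Suc 0) a_mono c k w = (\<Sum>i\<le>wt a_mono + wtmax w + nat \<bar>k\<bar> + 1.
    aM (- 1 - int i) (FM c (k + int i) w) + FM c (k - 1 - int i) (aM (int i) w))"
  by (simp add: a_mono_def Let_def emono_def del: sum.atMost_Suc)

lemma Yf_phi_mono: "Yf (Suc 0) phi_mono c k w = (\<Sum>i\<le>wt phi_mono + wtmax w + nat \<bar>k\<bar> + 1.
    phiM (- 1 - int i) (FM c (k + int i) w) + FM c (k - 1 - int i) (phiM (int i) w))"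
  by (simp add: phi_mono_def Let_def emono_def del: sum.atMost_Suc)

lemma Yf_psi_mono: "Yf (Suc 0) psi_mono c k w = (\<Sum>i\<le>wt psi_mono + wtmax w + nat \<bar>k\<bar> + 1.
    psiM (- 1 - int i) (FM c (k + int i) w) + FM c (k - 1 - int i) (psiM (int i) w))"
  by (simp add: psi_mono_def Let_def emono_def del: sum.atMost_Suc)

lemma Yf_phi_psi_mono: "Yf (Suc (Suc 0)) phi_psi_mono c k w =
   (\<Sum>i\<le>wt phi_psi_mono + wtmax w + nat \<bar>k\<bar> + 1.
    phiM (- 1 - int i) (Yf (Suc 0) psi_mono c (k + int i) w)
    + smul (-1) (Yf (Suc 0) psi_mono c (k - 1 - int i) (phiM (int i) w)))"
  by (simp add: phi_psi_mono_def psi_mono_def Let_def emono_def del: sum.atMost_Suc)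

lemma leading_term_Y_a:
  assumes n: "1 \<le> n" and w: "leading_term p (A,P,S,B) h w"
  shows "leading_term (p - 1) (A + {#n#},P,S,B) (\<lambda>\<tau>. c \<tau> * h \<tau>) (Yf (Suc 0) a_mono c (- int n) w)"
proof -
  have "leading_term (p + -1) (A + {#n#},P,S,B) (\<lambda>\<tau>. c \<tau> * h \<tau>) (aM (-1 - int (n - 1)) (FM c (-1) w))"
    using leading_term_aM[OF n leading_term_FM_mult[OF w]] n by (simp add: of_nat_diff)
  then have "leading_term (p + -1) (A + {#n#},P,S,B) (\<lambda>\<tau>. c \<tau> * h \<tau>) (Yf (Suc 0) a_mono c (- int n) w)"
    unfolding Yf_a_mono using n
    by (intro leading_term_mode_sum[where X = aM and d = "-1" and t = "n - 1"])
      (auto intro: part_ge_aM leading_term_part_ge[OF w])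
  then show ?thesis by simp
qed

lemma leading_term_Y_phi:
  assumes q: "q \<notin> P" and w: "leading_term p (A,P,S,B) h w"
  shows "leading_term (p + 1) (A,insert q P,S,B) (\<lambda>\<tau>. (-1) ^ card {x\<in>P. q < x} * (c \<tau> * h \<tau>))
    (Yf (Suc 0) phi_mono c (- int q - 1) w)"
proof -
  have "- int q - 1 = -1 - int q" by simp
  then have "leading_term (p + 1) (A,insert q P,S,B) (\<lambda>\<tau>. (-1) ^ card {x\<in>P. q < x} * (c \<tau> * h \<tau>))
      (phiM (-1 - int q) (FM c (-1) w))"
    using leading_term_phiM[OF q leading_term_FM_mult[OF w]] by metis
  then show ?thesis unfolding Yf_phi_mono
    by (intro leading_term_mode_sum[where X = phiM and d = 1 and t = q])
      (auto intro: part_ge_phiM leading_term_part_ge[OF w])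
qed

lemma leading_term_Y_psi:
  assumes s: "s \<notin> S" "1 \<le> s" and w: "leading_term p (A,P,S,B) h w"
  shows "leading_term (p - 1) (A,P,insert s S,B)
    (\<lambda>\<tau>. (-1) ^ (card P + card {x\<in>S. s < x}) * (c \<tau> * h \<tau>)) (Yf (Suc 0) psi_mono c (- int s) w)"
proof -
  have "leading_term (p + -1) (A,P,insert s S,B)
      (\<lambda>\<tau>. (-1) ^ (card P + card {x\<in>S. s < x}) * (c \<tau> * h \<tau>)) (psiM (-1 - int (s - 1)) (FM c (-1) w))"
    using leading_term_psiM[OF s leading_term_FM_mult[OF w]] s by (simp add: of_nat_diff)
  then have "leading_term (p + -1) (A,P,insert s S,B)
      (\<lambda>\<tau>. (-1) ^ (card P + card {x\<in>S. s < x}) * (c \<tau> * h \<tau>)) (Yf (Suc 0) psi_mono c (- int s) w)"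
    unfolding Yf_psi_mono using s
    by (intro leading_term_mode_sum[where X = psiM and d = "-1" and t = "s - 1"])
      (auto intro: part_ge_psiM leading_term_part_ge[OF w])
  then show ?thesis by simp
qed

lemma part_ge_Y_psi: "part_ge p w \<Longrightarrow> part_ge (p - 1) (Yf (Suc 0) psi_mono c k w)"
  unfolding Yf_psi_mono
  by (intro part_ge_sum part_ge_add part_ge_psiM part_ge_FM) (auto intro: part_ge_psiM part_ge_FM)

lemma part_ge_Y_phi_psi: "part_ge p w \<Longrightarrow> part_ge p (Yf (Suc (Suc 0)) phi_psi_mono c k w)"
  unfolding Yf_phi_psi_mono
  using part_ge_phiM[OF part_ge_Y_psi] part_ge_Y_psi[OF part_ge_phiM]
  by (intro part_ge_sum part_ge_add part_ge_smul) fastforce+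

section \<open>The action of SL(2,R) on the leading term\<close>

definition sl2r :: "real4 \<Rightarrow> bool" where
  "sl2r g = (case g of (\<alpha>,\<beta>,\<gamma>,\<delta>) \<Rightarrow> \<alpha> * \<delta> - \<beta> * \<gamma> = 1)"

lemma ii_in_HH: "\<i> \<in> HH"
  by (simp add: HH_def)

lemma jf_nonzero:
  assumes "sl2r g" "\<tau> \<in> HH" shows "jf g \<tau> \<noteq> 0"
proof (cases g)
  case (fields \<alpha> \<beta> \<gamma> \<delta>)
  show ?thesis
  proof
    assume "jf g \<tau> = 0"
    then have "Im (of_real \<gamma> * \<tau> + of_real \<delta>) = 0" "Re (of_real \<gamma> * \<tau> + of_real \<delta>) = 0"
      by (simp_all add: jf_def fields)
    then have "\<gamma> * Im \<tau> = 0" "\<gamma> * Re \<tau> + \<delta> = 0" by simp_all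
    moreover have "Im \<tau> > 0" using assms(2) by (simp add: HH_def)
    ultimately have "\<gamma> = 0" "\<delta> = 0" by auto
    then show False using assms(1) by (simp add: sl2r_def fields)
  qed
qed

lemma Im_mob: "sl2r g \<Longrightarrow> Im (mob g \<tau>) = Im \<tau> / (cmod (jf g \<tau>))^2"
proof (cases g)
  case (fields \<alpha> \<beta> \<gamma> \<delta>)
  assume "sl2r g"
  then have det: "\<alpha> * \<delta> - \<beta> * \<gamma> = 1" by (simp add: sl2r_def fields)
  have "Im (mob g \<tau>) = (Im (of_real \<alpha> * \<tau> + of_real \<beta>) * Re (jf g \<tau>)
      - Re (of_real \<alpha> * \<tau> + of_real \<beta>) * Im (jf g \<tau>)) / (cmod (jf g \<tau>))^2"
    by (simp add: mob_def jf_def fields Im_divide cmod_power2)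
  also have "Im (of_real \<alpha> * \<tau> + of_real \<beta>) * Re (jf g \<tau>) - Re (of_real \<alpha> * \<tau> + of_real \<beta>) * Im (jf g \<tau>)
      = Im \<tau> * (\<alpha> * \<delta> - \<beta> * \<gamma>)"
    by (simp add: jf_def fields algebra_simps)
  finally show ?thesis using det by simp
qed

lemma mob_in_HH: "sl2r g \<Longrightarrow> \<tau> \<in> HH \<Longrightarrow> mob g \<tau> \<in> HH"
  using Im_mob[of g \<tau>] jf_nonzero[of g \<tau>] by (simp add: HH_def)

lemma deriv_mob:
  assumes "sl2r g" "\<tau> \<in> HH" shows "deriv (mob g) \<tau> = 1 / (jf g \<tau>)^2"
proof (cases g)
  case (fields \<alpha> \<beta> \<gamma> \<delta>)
  have det: "\<alpha> * \<delta> - \<beta> * \<gamma> = 1" using assms by (simp add: sl2r_def fields)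
  have nz: "of_real \<gamma> * \<tau> + of_real \<delta> \<noteq> 0" using jf_nonzero[OF assms] by (simp add: jf_def fields)
  have "((\<lambda>z. (of_real \<alpha> * z + of_real \<beta>) / (of_real \<gamma> * z + of_real \<delta>)) has_field_derivative
     ((of_real \<alpha> * (of_real \<gamma> * \<tau> + of_real \<delta>) - (of_real \<alpha> * \<tau> + of_real \<beta>) * of_real \<gamma>)
      / (of_real \<gamma> * \<tau> + of_real \<delta>)^2)) (at \<tau>)"
    using nz by (auto intro!: derivative_eq_intros simp: power2_eq_square)
  moreover have "of_real \<alpha> * (of_real \<gamma> * \<tau> + of_real \<delta>) - (of_real \<alpha> * \<tau> + of_real \<beta>) * of_real \<gamma>
      = (of_real (\<alpha> * \<delta> - \<beta> * \<gamma>) :: complex)"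
    by (simp add: algebra_simps)
  moreover have "mob g = (\<lambda>z. (of_real \<alpha> * z + of_real \<beta>) / (of_real \<gamma> * z + of_real \<delta>))"
    by (rule ext) (simp add: mob_def fields)
  ultimately have "(mob g has_field_derivative 1 / (jf g \<tau>)^2) (at \<tau>)"
    using det by (simp add: jf_def fields)
  then show ?thesis by (rule DERIV_imp_deriv)
qed

lemma nz_jf_square: "sl2r g \<Longrightarrow> nz (\<lambda>\<tau>. (jf g \<tau>)^2)"
  using jf_nonzero[of g \<i>] ii_in_HH unfolding nz_def by auto

text \<open>\<pi>(g)a also contains the term 2\<gamma>(c\<tau> + d) \<phi>_0 \<psi>_(-1), but its vertex operator does
  not change the part, so it does not reach the leading term.\<close>
lemma leading_term_YM_a:
  assumes g: "sl2r g" and n: "1 \<le> n" and w: "leading_term p (A,P,S,B) h w"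
  shows "leading_term (p - 1) (A + {#n#},P,S,B) (\<lambda>\<tau>. (jf g \<tau>)^2 * h \<tau>) (YM (piA g) (- int n) w)"
  unfolding YM_def
proof (rule leading_term_sum)
  have "phi_psi_mono \<noteq> a_mono" by (simp add: phi_psi_mono_def a_mono_def)
  then have coeff: "piA g a_mono = (\<lambda>\<tau>. (jf g \<tau>)^2)"
    by (simp add: piA_def mon_def a_mono_def phi_psi_mono_def zero_fun_def)
  have supp: "supp (piA g) \<subseteq> {a_mono, phi_psi_mono}"
    using supp_add[of "mon a_mono (\<lambda>\<tau>. (jf g \<tau>)^2)"] supp_mon[of a_mono] supp_mon[of phi_psi_mono]
    unfolding piA_def a_mono_def phi_psi_mono_def by blast
  then show "finite (supp (piA g))" using finite_subset by blast
  show "a_mono \<in> supp (piA g)" using coeff nz_jf_square[OF g] by (simp add: supp_def)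
  have "msize a_mono = Suc 0" by (simp add: msize_def a_mono_def)
  then show "leading_term (p - 1) (A + {#n#}, P, S, B) (\<lambda>\<tau>. (jf g \<tau>)^2 * h \<tau>)
     (Yf (msize a_mono) a_mono (piA g a_mono) (- int n) w)"
    using leading_term_Y_a[OF n w, of "\<lambda>\<tau>. (jf g \<tau>)^2"] coeff by (simp del: Yf.simps)
  fix m assume "m \<in> supp (piA g) - {a_mono}"
  then have m: "m = phi_psi_mono" using supp by blast
  have "msize phi_psi_mono = Suc (Suc 0)" by (simp add: msize_def phi_psi_mono_def)
  then show "part_ge (p - 1 + 1) (Yf (msize m) m (piA g m) (- int n) w)"
    using part_ge_Y_phi_psi[OF leading_term_part_ge[OF w]] m by (simp del: Yf.simps)
qed

lemma leading_term_YM_b: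
  assumes g: "sl2r g" and n: "1 \<le> n" and w: "leading_term p (A,P,S,B) h w"
  shows "leading_term (p + 1) (A,P,S,B + {#n#}) (\<lambda>\<tau>. h \<tau> / (jf g \<tau>)^2) (YM (piB g) (- int n - 1) w)"
proof -
  have "Im (mob g \<i>) > 0" using mob_in_HH[OF g ii_in_HH] by (simp add: HH_def)
  then have "emono \<in> supp (piB g)"
    using ii_in_HH unfolding supp_def piB_def mon_def nz_def by (auto intro!: bexI[of _ \<i>])
  then have "supp (piB g) = {emono}" using supp_mon unfolding piB_def by blast
  then have "YM (piB g) (- int n - 1) w = FM (mob g) (- int n - 1) w"
    unfolding YM_def by (simp add: msize_def emono_def piB_def mon_def)
  moreover have "leading_term (p + 1) (A,P,S,B + {#n#}) (\<lambda>\<tau>. h \<tau> / (jf g \<tau>)^2)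
      (FM (mob g) (- int n - 1) w)"
    using leading_term_FM_deriv[OF n w, of "mob g"]
    by (rule leading_term_cong) (simp add: deriv_mob[OF g])
  ultimately show ?thesis by simp
qed

lemma leading_term_YM_phi:
  assumes g: "sl2r g" and q: "q \<notin> P" and w: "leading_term p (A,P,S,B) h w"
  shows "leading_term (p + 1) (A,insert q P,S,B)
    (\<lambda>\<tau>. (-1) ^ card {x\<in>P. q < x} * (1 / (jf g \<tau>)^2 * h \<tau>)) (YM (piPhi g) (- int q - 1) w)"
proof -
  have "nz (\<lambda>\<tau>. 1 / (jf g \<tau>)^2)" using jf_nonzero[OF g ii_in_HH] ii_in_HH unfolding nz_def by auto
  then have "phi_mono \<in> supp (piPhi g)" by (simp add: supp_def piPhi_def mon_def phi_mono_def)
  then have "supp (piPhi g) = {phi_mono}" using supp_mon unfolding piPhi_def phi_mono_def by blast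
  then have "YM (piPhi g) (- int q - 1) w = Yf (Suc 0) phi_mono (\<lambda>\<tau>. 1 / (jf g \<tau>)^2) (- int q - 1) w"
    unfolding YM_def by (simp add: msize_def phi_mono_def piPhi_def mon_def del: Yf.simps)
  then show ?thesis using leading_term_Y_phi[OF q w, of "\<lambda>\<tau>. 1 / (jf g \<tau>)^2"] by (simp only:)
qed

lemma leading_term_YM_psi:
  assumes g: "sl2r g" and s: "s \<notin> S" "1 \<le> s" and w: "leading_term p (A,P,S,B) h w"
  shows "leading_term (p - 1) (A,P,insert s S,B)
    (\<lambda>\<tau>. (-1) ^ (card P + card {x\<in>S. s < x}) * ((jf g \<tau>)^2 * h \<tau>)) (YM (piPsi g) (- int s) w)"
proof -
  have "psi_mono \<in> supp (piPsi g)"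
    using nz_jf_square[OF g] by (simp add: supp_def piPsi_def mon_def psi_mono_def)
  then have "supp (piPsi g) = {psi_mono}" using supp_mon unfolding piPsi_def psi_mono_def by blast
  then have "YM (piPsi g) (- int s) w = Yf (Suc 0) psi_mono (\<lambda>\<tau>. (jf g \<tau>)^2) (- int s) w"
    unfolding YM_def by (simp add: msize_def psi_mono_def piPsi_def mon_def del: Yf.simps)
  then show ?thesis using leading_term_Y_psi[OF s w, of "\<lambda>\<tau>. (jf g \<tau>)^2"] by (simp only:)
qed

definition pi_leading_term :: "real4 \<Rightarrow> mono \<Rightarrow> cfun \<Rightarrow> state \<Rightarrow> bool" where
  "pi_leading_term g m f w \<longleftrightarrow>
     leading_term (part m) m (\<lambda>\<tau>. (jf g \<tau>) powi (- 2 * part m) * f (mob g \<tau>)) w"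

lemma powi_add_two: "(z::complex) \<noteq> 0 \<Longrightarrow> z powi (a + 2) = z powi a * z^2"
  by (simp add: power_int_add)

lemma pi_leading_term_YM_a:
  assumes g: "sl2r g" and n: "n \<in># A" "0 \<notin># A" and w: "pi_leading_term g (A - {#n#},P,S,B) f w"
  shows "pi_leading_term g (A,P,S,B) f (YM (piA g) (- int n) w)"
proof -
  have "1 \<le> n" using n by (cases n) auto
  have "Suc 0 \<le> size A" using n(1) by (auto simp: Suc_le_eq nonempty_has_size[symmetric])
  then have p: "part (A - {#n#},P,S,B) = part (A,P,S,B) + 1"
    using n by (simp add: part_eq size_Diff_singleton of_nat_diff)
  have "leading_term (part (A,P,S,B)) (A,P,S,B)
      (\<lambda>\<tau>. (jf g \<tau>)^2 * ((jf g \<tau>) powi (- 2 * (part (A,P,S,B) + 1)) * f (mob g \<tau>)))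
      (YM (piA g) (- int n) w)"
    using leading_term_YM_a[OF g \<open>1 \<le> n\<close> w[unfolded pi_leading_term_def p]] n by (simp add: insert_DiffM)
  then show ?thesis unfolding pi_leading_term_def
    by (rule leading_term_cong)
      (use powi_add_two[of "jf g _" "- 2 * (part (A,P,S,B) + 1)"] jf_nonzero[OF g]
        in \<open>simp add: algebra_simps\<close>)
qed

lemma pi_leading_term_YM_b:
  assumes g: "sl2r g" and n: "n \<in># B" "0 \<notin># B" and w: "pi_leading_term g (A,P,S,B - {#n#}) f w"
  shows "pi_leading_term g (A,P,S,B) f (YM (piB g) (- int n - 1) w)"
proof -
  have "1 \<le> n" using n by (cases n) auto
  have "Suc 0 \<le> size B" using n(1) by (auto simp: Suc_le_eq nonempty_has_size[symmetric])
  then have p: "part (A,P,S,B - {#n#}) = part (A,P,S,B) - 1"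
    using n by (simp add: part_eq size_Diff_singleton of_nat_diff)
  have "leading_term (part (A,P,S,B)) (A,P,S,B)
      (\<lambda>\<tau>. (jf g \<tau>) powi (- 2 * (part (A,P,S,B) - 1)) * f (mob g \<tau>) / (jf g \<tau>)^2)
      (YM (piB g) (- int n - 1) w)"
    using leading_term_YM_b[OF g \<open>1 \<le> n\<close> w[unfolded pi_leading_term_def p]] n by (simp add: insert_DiffM)
  then show ?thesis unfolding pi_leading_term_def
    by (rule leading_term_cong)
      (use powi_add_two[of "jf g _" "- 2 * part (A,P,S,B)"] jf_nonzero[OF g]
        in \<open>simp add: algebra_simps\<close>)
qed

text \<open>Since q is the largest element of P, \<phi>_(-q) is created in front of all other \<phi>'s
  and no sign occurs; likewise for \<psi>_(-s) below.\<close>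
lemma pi_leading_term_YM_phi:
  assumes g: "sl2r g" and q: "q \<in> P" "finite P" "\<forall>x\<in>P. x \<le> q"
    and w: "pi_leading_term g (A,P - {q},S,B) f w"
  shows "pi_leading_term g (A,P,S,B) f (YM (piPhi g) (- int q - 1) w)"
proof -
  have p: "part (A,P - {q},S,B) = part (A,P,S,B) - 1"
    using card_remove_int[OF q(2,1)] by (simp add: part_eq)
  have "card {x\<in>P - {q}. q < x} = 0" "insert q (P - {q}) = P" using q by (auto simp: card_eq_0_iff)
  then have "leading_term (part (A,P,S,B)) (A,P,S,B)
      (\<lambda>\<tau>. 1 / (jf g \<tau>)^2 * ((jf g \<tau>) powi (- 2 * (part (A,P,S,B) - 1)) * f (mob g \<tau>)))
      (YM (piPhi g) (- int q - 1) w)"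
    using leading_term_YM_phi[OF g _ w[unfolded pi_leading_term_def p], of q] by simp
  then show ?thesis unfolding pi_leading_term_def
    by (rule leading_term_cong)
      (use powi_add_two[of "jf g _" "- 2 * part (A,P,S,B)"] jf_nonzero[OF g]
        in \<open>simp add: algebra_simps\<close>)
qed

lemma pi_leading_term_YM_psi:
  assumes g: "sl2r g" and s: "s \<in> S" "finite S" "0 \<notin> S" "\<forall>x\<in>S. x \<le> s"
    and w: "pi_leading_term g (A,{},S - {s},B) f w"
  shows "pi_leading_term g (A,{},S,B) f (YM (piPsi g) (- int s) w)"
proof -
  have "1 \<le> s" using s by (cases s) auto
  have p: "part (A,{},S - {s},B) = part (A,{},S,B) + 1"
    using card_remove_int[OF s(2,1)] by (simp add: part_eq)
  have "card {x\<in>S - {s}. s < x} = 0" "insert s (S - {s}) = S" using s by (auto simp: card_eq_0_iff)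
  then have "leading_term (part (A,{},S,B)) (A,{},S,B)
      (\<lambda>\<tau>. (jf g \<tau>)^2 * ((jf g \<tau>) powi (- 2 * (part (A,{},S,B) + 1)) * f (mob g \<tau>)))
      (YM (piPsi g) (- int s) w)"
    using leading_term_YM_psi[OF g _ \<open>1 \<le> s\<close> w[unfolded pi_leading_term_def p]] by simp
  then show ?thesis unfolding pi_leading_term_def
    by (rule leading_term_cong)
      (use powi_add_two[of "jf g _" "- 2 * (part (A,{},S,B) + 1)"] jf_nonzero[OF g]
        in \<open>simp add: algebra_simps\<close>)
qed

lemma pi_leading_term_pif:
  assumes g: "sl2r g"
  shows "valid_mono m \<Longrightarrow> msize m = r \<Longrightarrow> pi_leading_term g m f (pif r g m f)"
proof (induction r arbitrary: m)
  case 0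
  then have "m = emono" by (cases m) (auto simp: valid_mono_def msize_def emono_def)
  then show ?case by (simp add: pi_leading_term_def emono_def part_eq leading_term_mon)
next
  case (Suc r)
  obtain A P S B where m: "m = (A,P,S,B)" by (cases m)
  have v: "finite P" "finite S" "0 \<notin># A" "0 \<notin># B" "0 \<notin> S"
    using Suc.prems by (auto simp: m valid_mono_def)
  have size: "size A + card P + card S + size B = Suc r" using Suc.prems by (simp add: m msize_def)
  have IH: "pi_leading_term g m' f (pif r g m' f)" if "valid_mono m'" "msize m' = r" for m'
    using Suc.IH that .
  consider "A \<noteq> {#}" | "A = {#}" "B \<noteq> {#}" | "A = {#}" "B = {#}" "P \<noteq> {}"
    | "A = {#}" "B = {#}" "P = {}" "S \<noteq> {}" | "A = {#}" "B = {#}" "P = {}" "S = {}"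
    by blast
  then show ?case
  proof cases
    case 1
    define n where "n = Max (set_mset A)"
    have n: "n \<in># A" using 1 by (simp add: n_def)
    then have "pi_leading_term g (A - {#n#},P,S,B) f (pif r g (A - {#n#},P,S,B) f)"
      using v size 1 by (intro IH)
        (auto simp: valid_mono_def msize_def size_Diff_singleton nonempty_has_size dest: in_diffD)
    then show ?thesis using pi_leading_term_YM_a[OF g n v(3)] 1 by (simp add: m n_def Let_def)
  next
    case 2
    define n where "n = Max (set_mset B)"
    have n: "n \<in># B" using 2 by (simp add: n_def)
    then have "pi_leading_term g (A,P,S,B - {#n#}) f (pif r g (A,P,S,B - {#n#}) f)"
      using v size 2 by (intro IH)
        (auto simp: valid_mono_def msize_def size_Diff_singleton nonempty_has_size dest: in_diffD)
    then show ?thesis using pi_leading_term_YM_b[OF g n v(4)] 2 by (simp add: m n_def Let_def)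
  next
    case 3
    define q where "q = Max P"
    have q: "q \<in> P" "\<forall>x\<in>P. x \<le> q" using 3 v(1) by (simp_all add: q_def)
    then have "pi_leading_term g (A,P - {q},S,B) f (pif r g (A,P - {q},S,B) f)"
      using v size card_gt_0_iff[of P] by (intro IH) (auto simp: valid_mono_def msize_def)
    then show ?thesis
      using pi_leading_term_YM_phi[OF g q(1) v(1) q(2)] 3 by (simp add: m q_def Let_def)
  next
    case 4
    define s where "s = Max S"
    have s: "s \<in> S" "\<forall>x\<in>S. x \<le> s" using 4 v(2) by (simp_all add: s_def)
    then have "pi_leading_term g (A,P,S - {s},B) f (pif r g (A,P,S - {s},B) f)"
      using v size card_gt_0_iff[of S] by (intro IH) (auto simp: valid_mono_def msize_def)
    then show ?thesis
      using pi_leading_term_YM_psi[OF g s(1) v(2,5) s(2)] 4 by (simp add: m s_def Let_def)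
  next
    case 5
    then show ?thesis using size by simp
  qed
qed

lemma piact_lowest_coeff:
  assumes g: "sl2r g" and v: "v \<in> W n0 k l" and m: "m \<in> Iset n0 k l" and \<tau>: "\<tau> \<in> HH"
  shows "piact g v m \<tau> = (jf g \<tau>) powi (- 2 * n0) * v m (mob g \<tau>)"
proof -
  have fin: "finite (supp v)" and sv: "\<And>m'. m' \<in> supp v \<Longrightarrow> valid_mono m' \<and> n0 \<le> part m'"
    using v by (auto simp: W_def)
  have pm: "part m = n0" using m by (simp add: Iset_def)
  let ?T = "\<lambda>m'. pif (msize m') g m' (v m') m \<tau>"
  have lead: "pi_leading_term g m' (v m') (pif (msize m') g m' (v m'))" if "m' \<in> supp v" for m'
    using pi_leading_term_pif[OF g] sv[OF that] by blast
  have others: "?T m' = 0" if "m' \<in> supp v - {m}" for m'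
  proof -
    have "n0 \<le> part m'" using sv that by blast
    then have "m \<notin> supp (pif (msize m') g m' (v m'))"
      using lead[of m'] that pm by (auto simp: pi_leading_term_def leading_term_def)
    then show ?thesis using not_in_supp_vanishes \<tau> by blast
  qed
  have "piact g v m \<tau> = (\<Sum>m'\<in>supp v. ?T m')"
    unfolding piact_def lin_def state_sum_apply ..
  also have "\<dots> = (if m \<in> supp v then ?T m else 0)"
  proof (cases "m \<in> supp v")
    case True
    then show ?thesis using fin others by (simp add: sum.remove)
  next
    case False
    then show ?thesis using others by (auto intro!: sum.neutral)
  qed
  also have "\<dots> = (jf g \<tau>) powi (- 2 * n0) * v m (mob g \<tau>)"
    using lead[of m] \<tau> pm not_in_supp_vanishes[OF _ mob_in_HH[OF g \<tau>]]
    by (auto simp: pi_leading_term_def leading_term_def)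
  finally show ?thesis .
qed

section \<open>Modular forms\<close>

lemma sl2r_rm: "g \<in> SL2Z \<Longrightarrow> sl2r (rm g)"
proof (cases g)
  case (fields a b c d)
  assume "g \<in> SL2Z"
  then have "real_of_int (a * d - b * c) = 1" by (simp add: SL2Z_def fields)
  then show ?thesis by (simp add: sl2r_def rm_def fields)
qed

lemma hol_cusp_cong:
  assumes eq: "\<And>\<tau>. \<tau> \<in> HH \<Longrightarrow> h \<tau> = h' \<tau>" and h: "hol_cusp h" shows "hol_cusp h'"
proof -
  from h obtain N c where N: "N > 0" "\<forall>\<tau>\<in>HH. h (\<tau> + of_nat N) = h \<tau>"
    "\<forall>\<tau>\<in>HH. (\<lambda>m. c m * exp (2 * of_real pi * \<i> * of_nat m * \<tau> / of_nat N)) sums h \<tau>"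
    unfolding hol_cusp_def by blast
  have "\<tau> + of_nat N \<in> HH" if "\<tau> \<in> HH" for \<tau> using that by (simp add: HH_def)
  then have "\<forall>\<tau>\<in>HH. h' (\<tau> + of_nat N) = h' \<tau>" using N(2) eq by metis
  moreover have "\<forall>\<tau>\<in>HH. (\<lambda>m. c m * exp (2 * of_real pi * \<i> * of_nat m * \<tau> / of_nat N)) sums h' \<tau>"
    using N(3) eq by metis
  ultimately show ?thesis unfolding hol_cusp_def using N(1) by blast
qed

lemma finite_Iset: "finite (Iset n0 k l)"
proof -
  let ?X = "{A :: nat multiset. 0 \<notin># A \<and> sum_mset A \<le> k}"
  have "Iset n0 k l \<subseteq> ?X \<times> Pow {0..k} \<times> Pow {0..k} \<times> ?X"
  proof
    fix m assume "m \<in> Iset n0 k l"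
    moreover obtain A P S B where m: "m = (A,P,S,B)" by (cases m)
    ultimately have v: "finite P" "finite S" "0 \<notin># A" "0 \<notin># B"
      and w: "sum_mset A + \<Sum>P + \<Sum>S + sum_mset B = k"
      by (auto simp: Iset_def valid_mono_def wt_def)
    have "P \<subseteq> {0..k}" using member_le_sum[of _ P id] v w by fastforce
    moreover have "S \<subseteq> {0..k}" using member_le_sum[of _ S id] v w by fastforce
    ultimately show "m \<in> ?X \<times> Pow {0..k} \<times> Pow {0..k} \<times> ?X" using v w m by auto
  qed
  moreover have "finite (?X \<times> Pow {0..k} \<times> Pow {0..k} \<times> ?X)"
    using finite_positive_multisets_sum_le[of k] by (intro finite_cartesian_product) auto
  ultimately show ?thesis by (rule finite_subset)
qed

lemma Wfix0_coeff_modular_form: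
  assumes \<Gamma>: "\<Gamma> \<subseteq> SL2Z" and v: "v \<in> Wfix0 \<Gamma> n0 k l" and m: "m \<in> Iset n0 k l"
  shows "modular_form (2 * n0) \<Gamma> (v m)"
  unfolding modular_form_def
proof (intro conjI ballI)
  have vW: "v \<in> W n0 k l" using v by (simp add: Wfix0_def)
  then show "v m holomorphic_on HH" by (cases m) (simp add: W_def)
  fix g \<tau> assume g: "g \<in> \<Gamma>" and \<tau>: "\<tau> \<in> HH"
  let ?j = "jf (rm g) \<tau>"
  have slg: "sl2r (rm g)" using sl2r_rm \<Gamma> g by blast
  have "\<forall>g\<in>\<Gamma>. \<forall>m. \<forall>\<tau>\<in>HH. piact (rm g) v m \<tau> = v m \<tau>" using v unfolding Wfix0_def by blast
  then have "v m \<tau> = piact (rm g) v m \<tau>" using g \<tau> by metis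
  also have "\<dots> = ?j powi (- 2 * n0) * v m (mob (rm g) \<tau>)"
    by (rule piact_lowest_coeff[OF slg vW m \<tau>])
  finally have "?j powi (2 * n0) * v m \<tau> = ?j powi (2 * n0) * ?j powi (- 2 * n0) * v m (mob (rm g) \<tau>)"
    by simp
  also have "?j powi (2 * n0) * ?j powi (- 2 * n0) = 1"
    using jf_nonzero[OF slg \<tau>] by (simp add: power_int_minus field_simps)
  finally show "v m (mob (rm g) \<tau>) = ?j powi (2 * n0) * v m \<tau>" by simp
next
  have vW: "v \<in> W n0 k l" using v by (simp add: Wfix0_def)
  fix \<rho> assume \<rho>: "\<rho> \<in> SL2Z"
  have "hol_cusp (piact (rm \<rho>) v m)" using v \<rho> unfolding Wfix0_def by blast
  then show "hol_cusp (\<lambda>\<tau>. (jf (rm \<rho>) \<tau>) powi (- (2 * n0)) * v m (mob (rm \<rho>) \<tau>))"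
    by (rule hol_cusp_cong[rotated]) (simp add: piact_lowest_coeff[OF sl2r_rm[OF \<rho>] vW m])
qed

lemma Wfix0_lowest_coeffs_vanish_iff:
  assumes v: "v \<in> Wfix0 \<Gamma> n0 k l"
  shows "(\<forall>m\<in>Iset n0 k l. \<forall>\<tau>\<in>HH. v m \<tau> = 0) \<longleftrightarrow> v \<in> Wfix0 \<Gamma> (n0 + 1) k l"
proof
  assume "\<forall>m\<in>Iset n0 k l. \<forall>\<tau>\<in>HH. v m \<tau> = 0"
  then have "supp v \<inter> Iset n0 k l = {}" by (auto simp: supp_def nz_def)
  then have "n0 + 1 \<le> part m" if "m \<in> supp v" for m
    using v that by (fastforce simp: Wfix0_def W_def Iset_def)
  then show "v \<in> Wfix0 \<Gamma> (n0 + 1) k l" using v by (auto simp: Wfix0_def W_def)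
next
  assume "v \<in> Wfix0 \<Gamma> (n0 + 1) k l"
  then have "m \<notin> supp v" if "m \<in> Iset n0 k l" for m using that by (auto simp: Wfix0_def W_def Iset_def)
  then show "\<forall>m\<in>Iset n0 k l. \<forall>\<tau>\<in>HH. v m \<tau> = 0" using not_in_supp_vanishes by blast
qed

theorem lemma3p4:
  fixes \<Gamma> :: "int4 set" and n0 :: int and k :: nat and l :: int
  assumes "congruence_subgroup \<Gamma>"
  shows "finite (Iset n0 k l)
    \<and> (\<forall>v\<in>Wfix0 \<Gamma> n0 k l. \<forall>m\<in>Iset n0 k l. modular_form (2 * n0) \<Gamma> (v m))
    \<and> (\<forall>v\<in>Wfix0 \<Gamma> n0 k l.
         (\<forall>m\<in>Iset n0 k l. \<forall>\<tau>\<in>HH. v m \<tau> = 0) \<longleftrightarrow> v \<in> Wfix0 \<Gamma> (n0 + 1) k l)"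
proof -
  have "\<Gamma> \<subseteq> SL2Z" using assms by (simp add: congruence_subgroup_def)
  then show ?thesis
    using finite_Iset Wfix0_coeff_modular_form Wfix0_lowest_coeffs_vanish_iff by blast
qed

end
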